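(* Let $p>1$, $\alpha\in\mathbb{R}$, and for $\bar w\in\mathbb{R}$, $s$ large, define $$N(\bar w,s)=h(s)|\bar w+1|^{p-1}(\bar w+1)\frac{\ln^\alpha(\psi_1^2(\bar w+1)^2+2)}{\ln^\alpha(\psi_1^2+2)}-h(s)(\bar w+1)-\bar w,$$ with $\psi_1=\psi_1(s)$. Then $$N(\bar w,s)=\frac{p\bar w^2}{2}+O\!\left(\frac{|\bar w|\ln s}{s^2}\right)+O\!\left(\frac{|\bar w|^2}{s}\right)+O(|\bar w|^3)\quad\text{as }(\bar w,s)\to(0,+\infty).$$
   Context: For $T>0$ let $\psi$ be the unique positive solution of $\psi'=\psi^p\ln^\alpha(\psi^2+2)$ with $\psi(t)\to+\infty$ as $t\to T$; set $\psi_1(s)=\psi(T-e^{-s})$ and $h(s)=e^{-s}\psi_1^{p-1}(s)\ln^\alpha(\psi_1^2(s)+2)$. *)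

theory Defs
  imports "HOL-Analysis.Analysis"
begin

definition psi1 :: "(real \<Rightarrow> real) \<Rightarrow> real \<Rightarrow> real \<Rightarrow> real" where
  "psi1 \<psi> T s = \<psi> (T - exp (- s))"

definition hfun :: "(real \<Rightarrow> real) \<Rightarrow> real \<Rightarrow> real \<Rightarrow> real \<Rightarrow> real \<Rightarrow> real" where
  "hfun \<psi> T p \<alpha> s = exp (- s) * psi1 \<psi> T s powr (p - 1)
      * ln ((psi1 \<psi> T s)\<^sup>2 + 2) powr \<alpha>"

definition Nfun :: "(real \<Rightarrow> real) \<Rightarrow> real \<Rightarrow> real \<Rightarrow> real \<Rightarrow> real \<Rightarrow> real \<Rightarrow> real" where
  "Nfun \<psi> T p \<alpha> w s =
     hfun \<psi> T p \<alpha> s * \<bar>w + 1\<bar> powr (p - 1) * (w + 1)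
       * ln ((psi1 \<psi> T s)\<^sup>2 * (w + 1)\<^sup>2 + 2) powr \<alpha> / ln ((psi1 \<psi> T s)\<^sup>2 + 2) powr \<alpha>
     - hfun \<psi> T p \<alpha> s * (w + 1) - w"

end

theory Submission
  imports Defs "HOL-Real_Asymp.Real_Asymp"
begin

text \<open>
  Write \<open>x = \<psi>\<^sub>1(s)\<close>, \<open>L = ln (x\<^sup>2 + 2)\<close> and \<open>\<epsilon> = 1 / L\<close>. Taylor expansion of
  \<open>(1 + w)\<^sup>p\<close> and of \<open>(ln (x\<^sup>2 (1 + w)\<^sup>2 + 2) / L)\<^sup>\<alpha> = 1 + 2 \<alpha> \<epsilon> w + O(w\<^sup>2 \<epsilon> + |w| \<epsilon>\<^sup>2)\<close>
  shows that \<open>N - p w\<^sup>2 / 2 = O(|w| \<epsilon>\<^sup>2 + w\<^sup>2 \<epsilon> + |w|\<^sup>3)\<close>, provided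
  \<open>h \<cdot> ((p - 1) + 2 \<alpha> \<epsilon>) = 1 + O(\<epsilon>\<^sup>2)\<close>. This last fact comes from the ODE: the profile
  \<open>\<Phi>(u) = u\<^bsup>1-p\<^esup> L(u)\<^bsup>-\<alpha>\<^esup> / ((p - 1) + 2 \<alpha> / L(u))\<close> satisfies
  \<open>\<Phi>'(u) u\<^sup>p L(u)\<^sup>\<alpha> = -1 + O(1 / L(u)\<^sup>2)\<close>, so integrating up to the blow-up time gives
  \<open>T - t = \<Phi>(\<psi>(t)) (1 + O(1 / L\<^sup>2))\<close>; as \<open>h \<cdot> ((p - 1) + 2 \<alpha> \<epsilon>) = e\<^sup>-\<^sup>s / \<Phi>(x)\<close> this is the
  required estimate. It also gives \<open>s = O(L)\<close>, i.e. \<open>\<epsilon> = O(1 / s)\<close>, which turns the error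
  terms into those of the statement.
\<close>

section \<open>Taylor bounds for \<open>(1 + w) powr a\<close>\<close>

lemma powr_one_plus_has_real_derivative:
  fixes a t :: real and m :: nat
  assumes "t > -1"
  shows "((\<lambda>t. (\<Prod>i<m. a - real i) * (1 + t) powr (a - real m)) has_real_derivative
           (\<Prod>i<Suc m. a - real i) * (1 + t) powr (a - real (Suc m))) (at t)"
proof -
  have "((\<lambda>t. (\<Prod>i<m. a - real i) * (1 + t) powr (a - real m)) has_real_derivative
      (\<Prod>i<m. a - real i) * ((a - real m) * (1 + t) powr (a - real m - 1) * 1)) (at t)"
    by (intro DERIV_cmult DERIV_powr[THEN DERIV_cong] derivative_eq_intros) (use assms in auto)
  then show ?thesis by (simp add: algebra_simps diff_diff_eq)
qed

lemma powr_one_plus_taylor3: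
  fixes a w :: real
  assumes w: "\<bar>w\<bar> \<le> 1/5"
  shows "\<bar>(1 + w) powr a - 1 - a * w - a * (a - 1) / 2 * w\<^sup>2\<bar>
           \<le> \<bar>a * (a - 1) * (a - 2)\<bar> * ((4/5) powr (a - 3) + (6/5) powr (a - 3)) / 6 * \<bar>w\<bar> ^ 3"
proof (cases "w = 0")
  case False
  define D where "D = (\<lambda>m (t::real). (\<Prod>i<m. a - real i) * (1 + t) powr (a - real m))"
  have der: "\<And>m t. -1/5 \<le> t \<Longrightarrow> (D m has_real_derivative D (Suc m) t) (at t)"
    unfolding D_def by (rule powr_one_plus_has_real_derivative) simp
  have "\<exists>t. (if w < 0 then w < t \<and> t < 0 else 0 < t \<and> t < w) \<and>
      (1 + w) powr a = (\<Sum>m<3. D m 0 / fact m * (w - 0) ^ m) + D 3 t / fact 3 * (w - 0) ^ 3"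
    by (rule Taylor[of 3 D "\<lambda>w. (1 + w) powr a" "-1/5" "1/5"]) (use w False der in \<open>auto simp: D_def\<close>)
  then obtain t where t_between: "if w < 0 then w < t \<and> t < 0 else 0 < t \<and> t < w"
    and "(1 + w) powr a = (\<Sum>m<3. D m 0 / fact m * w ^ m) + D 3 t / fact 3 * w ^ 3"
    by auto
  moreover have t: "\<bar>t\<bar> \<le> 1/5" using t_between w by (auto split: if_splits)
  ultimately have expansion: "(1 + w) powr a = 1 + a * w + a * (a - 1) / 2 * w\<^sup>2
                       + a * (a - 1) * (a - 2) * (1 + t) powr (a - 3) / 6 * w ^ 3"
    by (simp add: D_def eval_nat_numeral lessThan_Suc fact_numeral algebra_simps)
  have bound: "(1 + t) powr (a - 3) \<le> (4/5) powr (a - 3) + (6/5) powr (a - 3)"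
  proof (cases "a - 3 \<ge> 0")
    case True
    then have "(1 + t) powr (a - 3) \<le> (6/5) powr (a - 3)" using t by (intro powr_mono2) auto
    then show ?thesis by (smt (verit) powr_ge_zero)
  next
    case False
    then have "(1 + t) powr (a - 3) \<le> (4/5) powr (a - 3)" using t by (intro powr_mono2') auto
    then show ?thesis by (smt (verit) powr_ge_zero)
  qed
  have "\<bar>a * (a - 1) * (a - 2) * (1 + t) powr (a - 3) / 6 * w ^ 3\<bar>
      = \<bar>a * (a - 1) * (a - 2)\<bar> * (1 + t) powr (a - 3) / 6 * \<bar>w\<bar> ^ 3"
    by (simp add: abs_mult power_abs)
  also have "\<dots> \<le> \<bar>a * (a - 1) * (a - 2)\<bar> * ((4/5) powr (a - 3) + (6/5) powr (a - 3)) / 6 * \<bar>w\<bar> ^ 3"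
    using bound by (intro mult_right_mono divide_right_mono mult_left_mono) auto
  finally show ?thesis by (simp add: expansion)
qed simp

lemma small_powers_le:
  fixes w :: real
  assumes "\<bar>w\<bar> \<le> 1"
  shows "w\<^sup>2 \<le> \<bar>w\<bar>" and "\<bar>w\<bar> ^ 3 \<le> w\<^sup>2"
proof -
  have "\<bar>w\<bar> * \<bar>w\<bar> \<le> \<bar>w\<bar> * 1" using assms by (intro mult_left_mono) auto
  then show "w\<^sup>2 \<le> \<bar>w\<bar>" by (simp add: power2_eq_square)
  have "\<bar>w\<bar> * w\<^sup>2 \<le> 1 * w\<^sup>2" using assms by (intro mult_right_mono) auto
  then show "\<bar>w\<bar> ^ 3 \<le> w\<^sup>2" by (simp add: power2_eq_square power3_eq_cube)
qed

lemma powr_one_plus_estimates: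
  fixes a :: real
  obtains C where "C \<ge> 0"
    and "\<And>w. \<bar>w\<bar> \<le> 1/5 \<Longrightarrow> \<bar>(1 + w) powr a - 1\<bar> \<le> C * \<bar>w\<bar>"
    and "\<And>w. \<bar>w\<bar> \<le> 1/5 \<Longrightarrow> \<bar>(1 + w) powr a - 1 - a * w\<bar> \<le> C * w\<^sup>2"
    and "\<And>w. \<bar>w\<bar> \<le> 1/5 \<Longrightarrow> \<bar>(1 + w) powr a - 1 - a * w - a * (a - 1) / 2 * w\<^sup>2\<bar> \<le> C * \<bar>w\<bar> ^ 3"
proof
  define C3 where "C3 = \<bar>a * (a - 1) * (a - 2)\<bar> * ((4/5) powr (a - 3) + (6/5) powr (a - 3)) / 6"
  have C3: "C3 \<ge> 0" unfolding C3_def by simp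
  show "\<bar>a\<bar> + \<bar>a * (a - 1) / 2\<bar> + C3 \<ge> 0" using C3 by simp
  fix w :: real assume w: "\<bar>w\<bar> \<le> 1/5"
  have taylor3: "\<bar>(1 + w) powr a - 1 - a * w - a * (a - 1) / 2 * w\<^sup>2\<bar> \<le> C3 * \<bar>w\<bar> ^ 3"
    unfolding C3_def by (rule powr_one_plus_taylor3[OF w])
  have powers: "\<bar>w\<bar> ^ 3 \<le> w\<^sup>2" "w\<^sup>2 \<le> \<bar>w\<bar>"
    using small_powers_le[of w] w by simp_all
  have "\<bar>a * (a - 1) / 2 * w\<^sup>2\<bar> = \<bar>a * (a - 1) / 2\<bar> * w\<^sup>2" by (simp add: abs_mult)
  then have taylor2: "\<bar>(1 + w) powr a - 1 - a * w\<bar> \<le> (\<bar>a * (a - 1) / 2\<bar> + C3) * w\<^sup>2"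
    using taylor3 mult_left_mono[OF powers(1) C3]
      abs_triangle_ineq[of "(1 + w) powr a - 1 - a * w - a * (a - 1) / 2 * w\<^sup>2" "a * (a - 1) / 2 * w\<^sup>2"]
    by (simp add: algebra_simps)
  show "\<bar>(1 + w) powr a - 1 - a * w - a * (a - 1) / 2 * w\<^sup>2\<bar> \<le> (\<bar>a\<bar> + \<bar>a * (a - 1) / 2\<bar> + C3) * \<bar>w\<bar> ^ 3"
    using taylor3 mult_right_mono[of "C3" "\<bar>a\<bar> + \<bar>a * (a - 1) / 2\<bar> + C3" "\<bar>w\<bar> ^ 3"] by simp
  show "\<bar>(1 + w) powr a - 1 - a * w\<bar> \<le> (\<bar>a\<bar> + \<bar>a * (a - 1) / 2\<bar> + C3) * w\<^sup>2"
    using taylor2 mult_right_mono[of "\<bar>a * (a - 1) / 2\<bar> + C3" "\<bar>a\<bar> + \<bar>a * (a - 1) / 2\<bar> + C3" "w\<^sup>2"] by simp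
  have "(\<bar>a * (a - 1) / 2\<bar> + C3) * w\<^sup>2 \<le> (\<bar>a * (a - 1) / 2\<bar> + C3) * \<bar>w\<bar>"
    using powers(2) C3 by (intro mult_left_mono) auto
  then show "\<bar>(1 + w) powr a - 1\<bar> \<le> (\<bar>a\<bar> + \<bar>a * (a - 1) / 2\<bar> + C3) * \<bar>w\<bar>"
    using taylor2 abs_triangle_ineq[of "(1 + w) powr a - 1 - a * w" "a * w"]
    by (simp add: abs_mult algebra_simps)
qed

section \<open>The logarithmic weight \<open>ln (u\<^sup>2 + 2)\<close>\<close>

definition log_weight :: "real \<Rightarrow> real" where
  "log_weight u = ln (u\<^sup>2 + 2)"

lemma sq_plus_two_pos [simp]: "(0::real) < u\<^sup>2 + 2"
  by (rule add_nonneg_pos) auto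

lemma sq_plus_two_neq_zero [simp]: "(u::real)\<^sup>2 + 2 \<noteq> 0" "2 + (u::real)\<^sup>2 \<noteq> 0"
  using sq_plus_two_pos[of u] by linarith+

lemma log_weight_pos: "log_weight u > 0"
  unfolding log_weight_def by (smt (verit) ln_gt_zero zero_le_power2)

lemma log_weight_le: "log_weight u \<le> u\<^sup>2 + 2"
  unfolding log_weight_def by (smt (verit) ln_le_minus_one sq_plus_two_pos)

lemma log_weight_mono: "0 \<le> u \<Longrightarrow> u \<le> v \<Longrightarrow> log_weight u \<le> log_weight v"
  unfolding log_weight_def by (simp add: power_mono)

lemma log_weight_at_top: "filterlim log_weight at_top at_top"
  unfolding log_weight_def[abs_def] by real_asymp

lemma log_weight_has_real_derivative:
  "(log_weight has_real_derivative 2 * u / (u\<^sup>2 + 2)) (at u)"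
  unfolding log_weight_def[abs_def] by (auto intro!: derivative_eq_intros)

lemma log_weight_scaled_diff:
  fixes x w :: real
  assumes w: "\<bar>w\<bar> \<le> 1/5"
  shows "\<bar>log_weight (x * (1 + w)) - log_weight x\<bar> \<le> 5 * \<bar>w\<bar>"
    and "\<bar>log_weight (x * (1 + w)) - log_weight x - 2 * w\<bar> \<le> 11 * w\<^sup>2 + 4 * \<bar>w\<bar> / (x\<^sup>2 + 2)"
proof -
  define c where "c = x\<^sup>2 + 2"
  have c: "c > 0" "x\<^sup>2 = c - 2" "c \<ge> 2" unfolding c_def by simp_all
  define y where "y = (c - 2) / c * (2 * w + w\<^sup>2)"
  have frac: "0 \<le> (c - 2) / c" "(c - 2) / c \<le> 1" using c zero_le_power2[of x] by simp_all
  have "\<bar>w\<bar> * \<bar>w\<bar> \<le> \<bar>w\<bar> * (1/5)" using w by (intro mult_left_mono) auto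
  then have ww: "w\<^sup>2 \<le> \<bar>w\<bar> / 5" by (simp add: power2_eq_square)
  have "\<bar>y\<bar> \<le> \<bar>2 * w + w\<^sup>2\<bar>"
    unfolding y_def abs_mult using frac by (intro mult_left_le_one_le) auto
  then have y: "\<bar>y\<bar> \<le> 11/5 * \<bar>w\<bar>"
    using ww abs_triangle_ineq[of "2 * w" "w\<^sup>2"] by (simp add: abs_mult)
  have "y - 2 * w = (c - 2) / c * w\<^sup>2 - 4 * w / c"
    unfolding y_def using c(1) by (simp add: field_simps)
  then have "\<bar>y - 2 * w\<bar> \<le> \<bar>(c - 2) / c * w\<^sup>2\<bar> + \<bar>4 * w / c\<bar>"
    by (metis abs_triangle_ineq4)
  moreover have "\<bar>(c - 2) / c * w\<^sup>2\<bar> \<le> w\<^sup>2"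
    using mult_left_le_one_le[OF zero_le_power2[of w] frac] c by (simp add: abs_mult)
  moreover have "\<bar>4 * w / c\<bar> = 4 * \<bar>w\<bar> / c" using c(1) by (simp add: abs_mult)
  ultimately have y2: "\<bar>y - 2 * w\<bar> \<le> w\<^sup>2 + 4 * \<bar>w\<bar> / c" by linarith
  have "(x * (1 + w))\<^sup>2 + 2 = c * (1 + y)"
    unfolding y_def power_mult_distrib c(2) using c(1) by (simp add: field_simps power2_eq_square)
  moreover have "1 + y > 0" using y w by linarith
  ultimately have diff: "log_weight (x * (1 + w)) - log_weight x = ln (1 + y)"
    unfolding log_weight_def c_def[symmetric] using c(1) by (simp add: ln_mult)
  have "y\<^sup>2 \<le> (11/5 * \<bar>w\<bar>)\<^sup>2"
    using y by (metis abs_ge_zero power2_abs power_mono)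
  then have yy: "2 * y\<^sup>2 \<le> 242/25 * w\<^sup>2" by (simp add: power_mult_distrib power_divide)
  have ln_y: "\<bar>ln (1 + y) - y\<bar> \<le> 2 * y\<^sup>2"
    using y w by (intro abs_ln_one_plus_x_minus_x_bound) linarith
  show "\<bar>log_weight (x * (1 + w)) - log_weight x\<bar> \<le> 5 * \<bar>w\<bar>"
    unfolding diff using ln_y yy y ww by linarith
  show "\<bar>log_weight (x * (1 + w)) - log_weight x - 2 * w\<bar> \<le> 11 * w\<^sup>2 + 4 * \<bar>w\<bar> / (x\<^sup>2 + 2)"
    unfolding diff c_def[symmetric] using ln_y yy y2 by linarith
qed

lemma log_weight_ratio_expansion:
  fixes x w :: real
  assumes w: "\<bar>w\<bar> \<le> 1/5" and L: "1 \<le> log_weight x"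
  shows "\<bar>log_weight (x * (1 + w)) / log_weight x - 1\<bar> \<le> 5 * (\<bar>w\<bar> / log_weight x)"
    and "\<bar>log_weight (x * (1 + w)) / log_weight x - 1 - 2 * w / log_weight x\<bar>
           \<le> 11 * (w\<^sup>2 / log_weight x) + 4 * (\<bar>w\<bar> / (log_weight x)\<^sup>2)"
proof -
  define L where "L = log_weight x"
  define \<rho> where "\<rho> = log_weight (x * (1 + w)) - L"
  have L0: "L > 0" using L unfolding L_def by simp
  have eq: "log_weight (x * (1 + w)) / L - 1 = \<rho> / L" unfolding \<rho>_def using L0 by (simp add: field_simps)
  show "\<bar>log_weight (x * (1 + w)) / log_weight x - 1\<bar> \<le> 5 * (\<bar>w\<bar> / log_weight x)"
    using log_weight_scaled_diff(1)[OF w, of x] L0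
    unfolding L_def[symmetric] eq \<rho>_def by (simp add: divide_right_mono)
  have "4 * \<bar>w\<bar> / (x\<^sup>2 + 2) \<le> 4 * \<bar>w\<bar> / L"
    unfolding L_def using log_weight_le log_weight_pos by (intro divide_left_mono) auto
  then have "\<bar>\<rho> - 2 * w\<bar> \<le> 11 * w\<^sup>2 + 4 * \<bar>w\<bar> / L"
    using log_weight_scaled_diff(2)[OF w, of x] unfolding \<rho>_def L_def by linarith
  then have "\<bar>\<rho> - 2 * w\<bar> / L \<le> (11 * w\<^sup>2 + 4 * \<bar>w\<bar> / L) / L"
    using L0 by (intro divide_right_mono) auto
  moreover have "\<rho> / L - 2 * w / L = (\<rho> - 2 * w) / L" by (simp add: diff_divide_distrib)
  ultimately show "\<bar>log_weight (x * (1 + w)) / log_weight x - 1 - 2 * w / log_weight x\<bar>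
      \<le> 11 * (w\<^sup>2 / log_weight x) + 4 * (\<bar>w\<bar> / (log_weight x)\<^sup>2)"
    unfolding L_def[symmetric] eq using L0 by (simp add: add_divide_distrib power2_eq_square)
qed

lemma log_weight_ratio_powr_estimates:
  fixes \<alpha> :: real
  obtains C where "C \<ge> 0"
    and "\<And>x w. \<bar>w\<bar> \<le> 1/5 \<Longrightarrow> 5 \<le> log_weight x \<Longrightarrow>
           \<bar>(log_weight (x * (1 + w)) / log_weight x) powr \<alpha> - 1\<bar> \<le> C * (\<bar>w\<bar> / log_weight x)"
    and "\<And>x w. \<bar>w\<bar> \<le> 1/5 \<Longrightarrow> 5 \<le> log_weight x \<Longrightarrow>
           \<bar>(log_weight (x * (1 + w)) / log_weight x) powr \<alpha> - 1 - 2 * \<alpha> * w / log_weight x\<bar>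
             \<le> C * (w\<^sup>2 / log_weight x + \<bar>w\<bar> / (log_weight x)\<^sup>2)"
proof -
  obtain K where K: "K \<ge> 0"
    and lin: "\<And>z. \<bar>z\<bar> \<le> 1/5 \<Longrightarrow> \<bar>(1 + z) powr \<alpha> - 1\<bar> \<le> K * \<bar>z\<bar>"
    and quad: "\<And>z. \<bar>z\<bar> \<le> 1/5 \<Longrightarrow> \<bar>(1 + z) powr \<alpha> - 1 - \<alpha> * z\<bar> \<le> K * z\<^sup>2"
    and "\<And>z. \<bar>z\<bar> \<le> 1/5 \<Longrightarrow> \<bar>(1 + z) powr \<alpha> - 1 - \<alpha> * z - \<alpha> * (\<alpha> - 1) / 2 * z\<^sup>2\<bar> \<le> K * \<bar>z\<bar> ^ 3"
    using powr_one_plus_estimates[of \<alpha>] by blast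
  show thesis
  proof (rule that[of "25 * K + 11 * \<bar>\<alpha>\<bar>"])
    show "25 * K + 11 * \<bar>\<alpha>\<bar> \<ge> 0" using K by simp
  next
    fix x w :: real assume w: "\<bar>w\<bar> \<le> 1/5" and L5: "5 \<le> log_weight x"
    define L where "L = log_weight x"
    define z where "z = log_weight (x * (1 + w)) / L - 1"
    define X where "X = w\<^sup>2 / L"
    define Y where "Y = \<bar>w\<bar> / L\<^sup>2"
    have L: "1 \<le> L" using L5 unfolding L_def by simp
    have XY: "X \<ge> 0" "Y \<ge> 0" unfolding X_def Y_def using L by simp_all
    have "1 \<le> log_weight x" using L5 by simp
    note expansion = log_weight_ratio_expansion[OF w this, folded L_def, folded z_def X_def Y_def]
    have "5 * (\<bar>w\<bar> / L) \<le> 1/5" using w L5 unfolding L_def by (simp add: divide_le_eq)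
    then have z: "\<bar>z\<bar> \<le> 1/5" using expansion(1) L by linarith
    have "\<bar>(1 + z) powr \<alpha> - 1\<bar> \<le> K * (5 * (\<bar>w\<bar> / L))"
      using lin[OF z] mult_left_mono[OF expansion(1) K] L by linarith
    also have "\<dots> = 5 * K * (\<bar>w\<bar> / L)" by simp
    also have "\<dots> \<le> (25 * K + 11 * \<bar>\<alpha>\<bar>) * (\<bar>w\<bar> / L)"
      using K L by (intro mult_right_mono) auto
    finally show "\<bar>(log_weight (x * (1 + w)) / log_weight x) powr \<alpha> - 1\<bar>
        \<le> (25 * K + 11 * \<bar>\<alpha>\<bar>) * (\<bar>w\<bar> / log_weight x)"
      unfolding z_def L_def by simp
    have "z\<^sup>2 \<le> (5 * (\<bar>w\<bar> / L))\<^sup>2"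
      using expansion(1) by (metis abs_ge_zero power2_abs power_mono)
    also have "\<dots> = 25 * X / L" unfolding X_def by (simp add: power_divide power_mult_distrib power2_eq_square)
    also have "\<dots> \<le> 25 * X / 1" using L XY by (intro divide_left_mono) auto
    finally have "K * z\<^sup>2 \<le> K * (25 * X)" using K by (simp add: mult_left_mono)
    then have "\<bar>(1 + z) powr \<alpha> - 1 - \<alpha> * z\<bar> \<le> 25 * K * X" using quad[OF z] by linarith
    moreover have "\<bar>\<alpha> * z - 2 * \<alpha> * w / L\<bar> \<le> \<bar>\<alpha>\<bar> * (11 * X + 4 * Y)"
    proof -
      have "\<alpha> * z - 2 * \<alpha> * w / L = \<alpha> * (z - 2 * w / L)" by (simp add: algebra_simps)
      then show ?thesis using expansion(2) by (simp add: abs_mult mult_left_mono)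
    qed
    moreover have "(1 + z) powr \<alpha> - 1 - 2 * \<alpha> * w / L
        = ((1 + z) powr \<alpha> - 1 - \<alpha> * z) + (\<alpha> * z - 2 * \<alpha> * w / L)" by simp
    ultimately have "\<bar>(1 + z) powr \<alpha> - 1 - 2 * \<alpha> * w / L\<bar> \<le> 25 * K * X + \<bar>\<alpha>\<bar> * (11 * X + 4 * Y)"
      by (smt (verit) abs_triangle_ineq)
    also have "\<dots> \<le> (25 * K + 11 * \<bar>\<alpha>\<bar>) * (X + Y)"
      using K XY mult_right_mono[of "4 * \<bar>\<alpha>\<bar>" "25 * K + 11 * \<bar>\<alpha>\<bar>" Y] by (simp add: algebra_simps)
    finally show "\<bar>(log_weight (x * (1 + w)) / log_weight x) powr \<alpha> - 1 - 2 * \<alpha> * w / log_weight x\<bar>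
        \<le> (25 * K + 11 * \<bar>\<alpha>\<bar>) * (w\<^sup>2 / log_weight x + \<bar>w\<bar> / (log_weight x)\<^sup>2)"
      unfolding z_def X_def Y_def L_def by simp
  qed
qed

section \<open>The nonlinearity\<close>

lemma nonlinearity_expansion:
  fixes h A B w p \<alpha> \<epsilon> :: real
  defines "u \<equiv> h * (p - 1 + 2 * \<alpha> * \<epsilon>) - 1"
  shows "h * A * B - h * (w + 1) - w - p * w\<^sup>2 / 2
     = w * u + p / 2 * w\<^sup>2 * (u - 2 * \<alpha> * \<epsilon> * h) + h * (A - 1 - p * w - p * (p - 1) / 2 * w\<^sup>2)
       + h * (B - 1) * (A - 1) + h * (B - 1 - 2 * \<alpha> * \<epsilon> * w)"
  unfolding u_def by (simp add: field_simps power2_eq_square)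

lemma nonlinearity_termwise_bound:
  fixes h A B w p \<alpha> \<epsilon> K :: real
  assumes p: "0 \<le> p" and \<epsilon>: "0 \<le> \<epsilon>" "\<epsilon> \<le> 1" and h: "0 \<le> h" "h \<le> K"
    and hg: "\<bar>h * (p - 1 + 2 * \<alpha> * \<epsilon>) - 1\<bar> \<le> K * \<epsilon>\<^sup>2"
    and A1: "\<bar>A - 1\<bar> \<le> K * \<bar>w\<bar>"
    and A3: "\<bar>A - 1 - p * w - p * (p - 1) / 2 * w\<^sup>2\<bar> \<le> K * \<bar>w\<bar> ^ 3"
    and B1: "\<bar>B - 1\<bar> \<le> K * (\<bar>w\<bar> * \<epsilon>)"
    and B2: "\<bar>B - 1 - 2 * \<alpha> * \<epsilon> * w\<bar> \<le> K * (w\<^sup>2 * \<epsilon> + \<bar>w\<bar> * \<epsilon>\<^sup>2)"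
  shows "\<bar>h * A * B - h * (w + 1) - w - p * w\<^sup>2 / 2\<bar>
           \<le> K * (\<bar>w\<bar> * \<epsilon>\<^sup>2) + p * (1 + \<bar>\<alpha>\<bar>) * K * (w\<^sup>2 * \<epsilon>) + K\<^sup>2 * \<bar>w\<bar> ^ 3
             + K ^ 3 * (w\<^sup>2 * \<epsilon>) + K\<^sup>2 * (w\<^sup>2 * \<epsilon> + \<bar>w\<bar> * \<epsilon>\<^sup>2)"
proof -
  define u where "u = h * (p - 1 + 2 * \<alpha> * \<epsilon>) - 1"
  have K: "K \<ge> 0" using h by linarith
  have \<epsilon>2: "\<epsilon>\<^sup>2 \<le> \<epsilon>" using \<epsilon> by (simp add: power2_eq_square mult_left_le_one_le)
  have T1: "\<bar>w * u\<bar> \<le> K * (\<bar>w\<bar> * \<epsilon>\<^sup>2)"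
    using mult_left_mono[OF hg[folded u_def] abs_ge_zero[of w]] by (simp add: abs_mult ac_simps)
  have "\<bar>u\<bar> \<le> K * \<epsilon>" using hg[folded u_def] mult_left_mono[OF \<epsilon>2 K] by linarith
  moreover have "\<bar>2 * \<alpha> * \<epsilon> * h\<bar> \<le> 2 * \<bar>\<alpha>\<bar> * \<epsilon> * K"
    using h \<epsilon> by (simp add: abs_mult mult_left_mono)
  ultimately have "\<bar>u - 2 * \<alpha> * \<epsilon> * h\<bar> \<le> K * \<epsilon> + 2 * \<bar>\<alpha>\<bar> * \<epsilon> * K"
    by (smt (verit) abs_triangle_ineq4)
  then have "p / 2 * w\<^sup>2 * \<bar>u - 2 * \<alpha> * \<epsilon> * h\<bar> \<le> p / 2 * w\<^sup>2 * (K * \<epsilon> + 2 * \<bar>\<alpha>\<bar> * \<epsilon> * K)"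
    using p by (intro mult_left_mono) auto
  also have "\<dots> \<le> p * (1 + \<bar>\<alpha>\<bar>) * K * (w\<^sup>2 * \<epsilon>)"
    using p K \<epsilon> by (simp add: algebra_simps mult_left_mono)
  finally have T2: "\<bar>p / 2 * w\<^sup>2 * (u - 2 * \<alpha> * \<epsilon> * h)\<bar> \<le> p * (1 + \<bar>\<alpha>\<bar>) * K * (w\<^sup>2 * \<epsilon>)"
    using p by (simp add: abs_mult)
  have T3: "\<bar>h * (A - 1 - p * w - p * (p - 1) / 2 * w\<^sup>2)\<bar> \<le> K\<^sup>2 * \<bar>w\<bar> ^ 3"
    using mult_mono[OF h(2) A3] h K by (simp add: abs_mult power2_eq_square)
  have "\<bar>h * (B - 1) * (A - 1)\<bar> \<le> K * (K * (\<bar>w\<bar> * \<epsilon>)) * (K * \<bar>w\<bar>)"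
    unfolding abs_mult using h B1 A1 K \<epsilon> by (intro mult_mono) auto
  then have T4: "\<bar>h * (B - 1) * (A - 1)\<bar> \<le> K ^ 3 * (w\<^sup>2 * \<epsilon>)"
    by (simp add: power2_eq_square power3_eq_cube ac_simps)
  have T5: "\<bar>h * (B - 1 - 2 * \<alpha> * \<epsilon> * w)\<bar> \<le> K\<^sup>2 * (w\<^sup>2 * \<epsilon> + \<bar>w\<bar> * \<epsilon>\<^sup>2)"
    using mult_mono[OF h(2) B2] h K by (simp add: abs_mult power2_eq_square)
  have tri: "\<bar>a + b + c + d + e\<bar> \<le> \<bar>a\<bar> + \<bar>b\<bar> + \<bar>c\<bar> + \<bar>d\<bar> + \<bar>e\<bar>" for a b c d e :: real
    by linarith
  show ?thesis
    unfolding nonlinearity_expansion[of h A B w p \<alpha> \<epsilon>, folded u_def]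
    using tri T1 T2 T3 T4 T5 by (meson add_mono order_trans)
qed

lemma error_terms_collect:
  fixes K P X1 X2 X3 :: real
  assumes "K \<ge> 0" "P \<ge> 0" "X1 \<ge> 0" "X2 \<ge> 0" "X3 \<ge> 0"
  shows "K * X1 + P * K * X2 + K\<^sup>2 * X3 + K ^ 3 * X2 + K\<^sup>2 * (X2 + X1)
           \<le> (1 + P) * (K + K\<^sup>2 + K ^ 3) * (X1 + X2 + X3)"
proof -
  define S where "S = K + K\<^sup>2 + K ^ 3"
  have S: "K \<le> S" "K\<^sup>2 \<le> S" "K + K\<^sup>2 \<le> S" "K\<^sup>2 + K ^ 3 \<le> S" unfolding S_def using assms by simp_all
  have "P * K * X2 \<le> P * S * X2" using assms S by (intro mult_right_mono mult_left_mono) auto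
  moreover have "(K + K\<^sup>2) * X1 \<le> S * X1" "(K\<^sup>2 + K ^ 3) * X2 \<le> S * X2" "K\<^sup>2 * X3 \<le> S * X3"
    using S assms by (auto intro: mult_right_mono)
  moreover have "0 \<le> P * S * X1" "0 \<le> P * S * X3" using assms S by auto
  ultimately show ?thesis unfolding S_def[symmetric] by (simp add: algebra_simps)
qed

text \<open>Up to \<open>O(1 / (u\<^sup>2 L))\<close>, \<open>rate p \<alpha> u\<close> is the logarithmic derivative \<open>u (u\<^bsup>p-1\<^esup> L\<^sup>\<alpha>)' / (u\<^bsup>p-1\<^esup> L\<^sup>\<alpha>)\<close>.\<close>

definition rate :: "real \<Rightarrow> real \<Rightarrow> real \<Rightarrow> real" where
  "rate p \<alpha> u = p - 1 + 2 * \<alpha> / log_weight u"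

lemma Nfun_main_term_eq:
  fixes x w h p \<alpha> :: real
  assumes "\<bar>w\<bar> \<le> 1/5"
  shows "h * \<bar>w + 1\<bar> powr (p - 1) * (w + 1) * ln (x\<^sup>2 * (w + 1)\<^sup>2 + 2) powr \<alpha> / ln (x\<^sup>2 + 2) powr \<alpha>
       = h * (1 + w) powr p * (log_weight (x * (1 + w)) / log_weight x) powr \<alpha>"
proof -
  have "w + 1 > 0" using assms by linarith
  then have "\<bar>w + 1\<bar> powr (p - 1) * (w + 1) = (1 + w) powr p"
    by (simp add: powr_diff add.commute)
  moreover have "ln (x\<^sup>2 * (w + 1)\<^sup>2 + 2) powr \<alpha> / ln (x\<^sup>2 + 2) powr \<alpha>
      = (log_weight (x * (1 + w)) / log_weight x) powr \<alpha>"
    unfolding log_weight_def by (simp add: powr_divide power_mult_distrib add.commute)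
  ultimately show ?thesis by (metis (no_types, lifting) mult.assoc times_divide_eq_right)
qed

lemma nonlinearity_estimate:
  fixes p \<alpha> K :: real
  assumes p: "p \<ge> 0"
  obtains M where "M \<ge> 0"
    and "\<And>x h w. \<bar>w\<bar> \<le> 1/5 \<Longrightarrow> 5 \<le> log_weight x \<Longrightarrow> 0 \<le> h \<Longrightarrow> h \<le> K \<Longrightarrow>
      \<bar>h * rate p \<alpha> x - 1\<bar> \<le> K / (log_weight x)\<^sup>2 \<Longrightarrow>
      \<bar>h * \<bar>w + 1\<bar> powr (p - 1) * (w + 1) * ln (x\<^sup>2 * (w + 1)\<^sup>2 + 2) powr \<alpha> / ln (x\<^sup>2 + 2) powr \<alpha>
         - h * (w + 1) - w - p * w\<^sup>2 / 2\<bar>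
        \<le> M * (\<bar>w\<bar> / (log_weight x)\<^sup>2 + w\<^sup>2 / log_weight x + \<bar>w\<bar> ^ 3)"
proof -
  obtain Cp where Cp: "Cp \<ge> 0"
    and A1: "\<And>w. \<bar>w\<bar> \<le> 1/5 \<Longrightarrow> \<bar>(1 + w) powr p - 1\<bar> \<le> Cp * \<bar>w\<bar>"
    and "\<And>w. \<bar>w\<bar> \<le> 1/5 \<Longrightarrow> \<bar>(1 + w) powr p - 1 - p * w\<bar> \<le> Cp * w\<^sup>2"
    and A3: "\<And>w. \<bar>w\<bar> \<le> 1/5 \<Longrightarrow> \<bar>(1 + w) powr p - 1 - p * w - p * (p - 1) / 2 * w\<^sup>2\<bar> \<le> Cp * \<bar>w\<bar> ^ 3"
    using powr_one_plus_estimates[of p] by blast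
  obtain Cb where Cb: "Cb \<ge> 0"
    and B1: "\<And>x w. \<bar>w\<bar> \<le> 1/5 \<Longrightarrow> 5 \<le> log_weight x \<Longrightarrow>
           \<bar>(log_weight (x * (1 + w)) / log_weight x) powr \<alpha> - 1\<bar> \<le> Cb * (\<bar>w\<bar> / log_weight x)"
    and B2: "\<And>x w. \<bar>w\<bar> \<le> 1/5 \<Longrightarrow> 5 \<le> log_weight x \<Longrightarrow>
           \<bar>(log_weight (x * (1 + w)) / log_weight x) powr \<alpha> - 1 - 2 * \<alpha> * w / log_weight x\<bar>
             \<le> Cb * (w\<^sup>2 / log_weight x + \<bar>w\<bar> / (log_weight x)\<^sup>2)"
    using log_weight_ratio_powr_estimates[of \<alpha>] by blast
  define K' where "K' = max K (max Cp Cb)"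
  define M where "M = (1 + p * (1 + \<bar>\<alpha>\<bar>)) * (K' + K'\<^sup>2 + K' ^ 3)"
  show thesis
  proof (rule that[of M])
    show "M \<ge> 0" unfolding M_def K'_def using p Cp by (intro mult_nonneg_nonneg add_nonneg_nonneg) auto
  next
    fix x h w :: real
    assume w: "\<bar>w\<bar> \<le> 1/5" and L: "5 \<le> log_weight x" and h: "0 \<le> h" "h \<le> K"
      and hg: "\<bar>h * rate p \<alpha> x - 1\<bar> \<le> K / (log_weight x)\<^sup>2"
    define \<epsilon> where "\<epsilon> = 1 / log_weight x"
    have \<epsilon>: "0 \<le> \<epsilon>" "\<epsilon> \<le> 1" unfolding \<epsilon>_def using L by simp_all
    have K': "K \<le> K'" "Cp \<le> K'" "Cb \<le> K'" unfolding K'_def by simp_all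
    have X: "0 \<le> \<bar>w\<bar>" "0 \<le> \<bar>w\<bar> ^ 3" "0 \<le> \<bar>w\<bar> * \<epsilon>" "0 \<le> w\<^sup>2 * \<epsilon> + \<bar>w\<bar> * \<epsilon>\<^sup>2" "0 \<le> \<epsilon>\<^sup>2"
      using \<epsilon> by simp_all
    have "\<bar>h * (1 + w) powr p * (log_weight (x * (1 + w)) / log_weight x) powr \<alpha>
        - h * (w + 1) - w - p * w\<^sup>2 / 2\<bar>
        \<le> K' * (\<bar>w\<bar> * \<epsilon>\<^sup>2) + p * (1 + \<bar>\<alpha>\<bar>) * K' * (w\<^sup>2 * \<epsilon>) + K'\<^sup>2 * \<bar>w\<bar> ^ 3
           + K' ^ 3 * (w\<^sup>2 * \<epsilon>) + K'\<^sup>2 * (w\<^sup>2 * \<epsilon> + \<bar>w\<bar> * \<epsilon>\<^sup>2)"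
    proof (rule nonlinearity_termwise_bound[OF p \<epsilon> h(1) order_trans[OF h(2) K'(1)]])
      show "\<bar>h * (p - 1 + 2 * \<alpha> * \<epsilon>) - 1\<bar> \<le> K' * \<epsilon>\<^sup>2"
        using hg mult_right_mono[OF K'(1) X(5)] unfolding rate_def \<epsilon>_def by (simp add: power_divide)
      show "\<bar>(1 + w) powr p - 1\<bar> \<le> K' * \<bar>w\<bar>"
        using A1[OF w] mult_right_mono[OF K'(2) X(1)] by simp
      show "\<bar>(1 + w) powr p - 1 - p * w - p * (p - 1) / 2 * w\<^sup>2\<bar> \<le> K' * \<bar>w\<bar> ^ 3"
        using A3[OF w] mult_right_mono[OF K'(2) X(2)] by simp
      show "\<bar>(log_weight (x * (1 + w)) / log_weight x) powr \<alpha> - 1\<bar> \<le> K' * (\<bar>w\<bar> * \<epsilon>)"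
        using B1[OF w L] mult_right_mono[OF K'(3) X(3)] unfolding \<epsilon>_def by simp
      show "\<bar>(log_weight (x * (1 + w)) / log_weight x) powr \<alpha> - 1 - 2 * \<alpha> * \<epsilon> * w\<bar>
          \<le> K' * (w\<^sup>2 * \<epsilon> + \<bar>w\<bar> * \<epsilon>\<^sup>2)"
        using B2[OF w L] mult_right_mono[OF K'(3) X(4)] unfolding \<epsilon>_def by (simp add: power_divide)
    qed
    also have "\<dots> \<le> M * (\<bar>w\<bar> * \<epsilon>\<^sup>2 + w\<^sup>2 * \<epsilon> + \<bar>w\<bar> ^ 3)"
      unfolding M_def using h K'(1) p \<epsilon> by (intro error_terms_collect) auto
    finally show "\<bar>h * \<bar>w + 1\<bar> powr (p - 1) * (w + 1) * ln (x\<^sup>2 * (w + 1)\<^sup>2 + 2) powr \<alpha> / ln (x\<^sup>2 + 2) powr \<alpha>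
         - h * (w + 1) - w - p * w\<^sup>2 / 2\<bar>
        \<le> M * (\<bar>w\<bar> / (log_weight x)\<^sup>2 + w\<^sup>2 / log_weight x + \<bar>w\<bar> ^ 3)"
      unfolding Nfun_main_term_eq[OF w] \<epsilon>_def by (simp add: power_divide)
  qed
qed

section \<open>The blow-up profile\<close>

text \<open>\<open>time_profile p \<alpha> u\<close> approximates the remaining time \<open>T - t\<close> when \<open>\<psi>(t) = u\<close>.\<close>

definition time_profile :: "real \<Rightarrow> real \<Rightarrow> real \<Rightarrow> real" where
  "time_profile p \<alpha> u = u powr (1 - p) * log_weight u powr (- \<alpha>) / rate p \<alpha> u"

definition profile_defect :: "real \<Rightarrow> real \<Rightarrow> real \<Rightarrow> real" where
  "profile_defect p \<alpha> u = 4 * \<alpha> / ((u\<^sup>2 + 2) * log_weight u * rate p \<alpha> u)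
      + 4 * \<alpha> * u\<^sup>2 / ((u\<^sup>2 + 2) * (log_weight u)\<^sup>2 * (rate p \<alpha> u)\<^sup>2)"

lemma time_profile_derivative_identity:
  fixes u L g P Q p \<alpha> :: real
  defines "m \<equiv> 2 * u / (u\<^sup>2 + 2)"
  assumes L: "L > 0" and g: "g \<noteq> 0" and PQ: "P > 0" "Q > 0" and rel: "1 - p = 2 * \<alpha> / L - g"
  shows "(((1 - p) / (P * Q) - \<alpha> * m * u / (P * Q * L)) * g + u / (P * Q) * (2 * \<alpha> * m) / L\<^sup>2) / (g * g)
      = (4 * \<alpha> / ((u\<^sup>2 + 2) * L * g) + 4 * \<alpha> * u\<^sup>2 / ((u\<^sup>2 + 2) * L\<^sup>2 * g\<^sup>2) - 1) / (P * Q)"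
proof -
  define q where "q = u\<^sup>2 + 2"
  have q: "q > 0" "u\<^sup>2 = q - 2" unfolding q_def by simp_all
  have mu: "m * u = 2 * (q - 2) / q" unfolding m_def q_def by (simp add: power2_eq_square)
  have key: "(1 - p) - \<alpha> * (m * u) / L = 4 * \<alpha> / (q * L) - g"
    unfolding mu rel using L q by (simp add: field_simps)
  have "(((1 - p) / (P * Q) - \<alpha> * m * u / (P * Q * L)) * g + u / (P * Q) * (2 * \<alpha> * m) / L\<^sup>2) / (g * g)
      = (((1 - p) - \<alpha> * (m * u) / L) * g + 2 * \<alpha> * (m * u) / L\<^sup>2) / (g * g) / (P * Q)"
    using PQ by (simp add: field_simps)
  also have "\<dots> = ((4 * \<alpha> / (q * L) - g) * g + 2 * \<alpha> * (m * u) / L\<^sup>2) / (g * g) / (P * Q)"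
    unfolding key ..
  also have "\<dots> = (4 * \<alpha> / (q * L * g) + 4 * \<alpha> * (q - 2) / (q * L\<^sup>2 * g\<^sup>2) - 1) / (P * Q)"
    unfolding mu using L q PQ g by (simp add: field_simps power2_eq_square)
  finally show ?thesis unfolding q_def by simp
qed

lemma time_profile_has_real_derivative:
  assumes u: "u > 0" and g: "rate p \<alpha> u \<noteq> 0"
  shows "(time_profile p \<alpha> has_real_derivative
            (profile_defect p \<alpha> u - 1) / (u powr p * log_weight u powr \<alpha>)) (at u)"
proof -
  define L where "L = log_weight u"
  define m where "m = 2 * u / (u\<^sup>2 + 2)"
  define P where "P = u powr p"
  define Q where "Q = L powr \<alpha>"
  have L: "L > 0" unfolding L_def by (rule log_weight_pos)
  have PQ: "P > 0" "Q > 0" unfolding P_def Q_def using u L by simp_all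
  have dE: "((\<lambda>u. u powr (1 - p) * log_weight u powr (- \<alpha>)) has_real_derivative
      (1 - p) * u powr (- p) * L powr (- \<alpha>) - \<alpha> * m * u powr (1 - p) * L powr (- \<alpha> - 1)) (at u)"
    using DERIV_mult[OF has_real_derivative_powr[OF u, of "1 - p"]
        DERIV_fun_powr[OF log_weight_has_real_derivative log_weight_pos, of "- \<alpha>"]]
    unfolding L_def m_def by (simp add: algebra_simps)
  have dg: "(rate p \<alpha> has_real_derivative - (2 * \<alpha> * m) / L\<^sup>2) (at u)"
    unfolding rate_def[abs_def] L_def m_def
    by (rule derivative_eq_intros log_weight_has_real_derivative refl
        | use log_weight_pos[of u] in \<open>simp add: power2_eq_square\<close>)+
  have "u powr (- p) = 1 / P" "u powr (1 - p) = u / P"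
    "L powr (- \<alpha>) = 1 / Q" "L powr (- \<alpha> - 1) = 1 / (Q * L)"
    unfolding P_def Q_def using u L by (simp_all add: powr_diff powr_minus_divide powr_add)
  then have "(time_profile p \<alpha> has_real_derivative
      (((1 - p) / (P * Q) - \<alpha> * m * u / (P * Q * L)) * rate p \<alpha> u
        + u / (P * Q) * (2 * \<alpha> * m) / L\<^sup>2) / (rate p \<alpha> u * rate p \<alpha> u)) (at u)"
    unfolding time_profile_def[abs_def] using DERIV_divide[OF dE dg g] by (simp add: L_def mult.assoc)
  moreover have "1 - p = 2 * \<alpha> / L - rate p \<alpha> u" unfolding rate_def L_def by simp
  note identity = time_profile_derivative_identity[OF L g PQ this, where u = u]
  ultimately show ?thesis
    using identity unfolding m_def
    unfolding profile_defect_def P_def Q_def L_def by simp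
qed

lemma rate_tendsto: "(rate p \<alpha> \<longlongrightarrow> p - 1) at_top"
  unfolding rate_def[abs_def] log_weight_def by real_asymp

lemma time_profile_tendsto_zero:
  assumes "p > 1"
  shows "(time_profile p \<alpha> \<longlongrightarrow> 0) at_top"
  using assms unfolding time_profile_def[abs_def] rate_def log_weight_def by real_asymp

lemma profile_defect_bigo:
  assumes "p > 1"
  shows "profile_defect p \<alpha> \<in> O(\<lambda>u. 1 / (log_weight u)\<^sup>2)"
  using assms unfolding profile_defect_def[abs_def] rate_def log_weight_def by real_asymp

lemma ln_time_profile_bigo:
  assumes "p > 1"
  shows "(\<lambda>u. ln (time_profile p \<alpha> u)) \<in> O(log_weight)"
  using assms unfolding time_profile_def[abs_def] rate_def log_weight_def[abs_def] by real_asymp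

lemma time_profile_along_solution:
  fixes \<psi> :: "real \<Rightarrow> real"
  assumes "\<psi> t > 0" and "rate p \<alpha> (\<psi> t) \<noteq> 0"
    and "(\<psi> has_real_derivative \<psi> t powr p * ln ((\<psi> t)\<^sup>2 + 2) powr \<alpha>) (at t)"
  shows "((\<lambda>t. time_profile p \<alpha> (\<psi> t)) has_real_derivative profile_defect p \<alpha> (\<psi> t) - 1) (at t)"
proof -
  have nz: "\<psi> t powr p * log_weight (\<psi> t) powr \<alpha> \<noteq> 0"
    using assms(1) log_weight_pos[of "\<psi> t"] by simp
  have ode: "(\<psi> has_real_derivative \<psi> t powr p * log_weight (\<psi> t) powr \<alpha>) (at t)"
    using assms(3) unfolding log_weight_def .
  show ?thesis
    using DERIV_chain2[OF time_profile_has_real_derivative[OF assms(1,2)] ode] nz by simp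
qed

lemma abs_le_of_deriv_bound_tendsto_at_left:
  fixes D D' :: "real \<Rightarrow> real"
  assumes t: "t < T" and lim: "(D \<longlongrightarrow> 0) (at_left T)"
    and deriv: "\<And>z. t \<le> z \<Longrightarrow> z < T \<Longrightarrow> (D has_real_derivative D' z) (at z)"
    and bound: "\<And>z. t \<le> z \<Longrightarrow> z < T \<Longrightarrow> \<bar>D' z\<bar> \<le> c"
  shows "\<bar>D t\<bar> \<le> c * (T - t)"
proof -
  have increment: "\<bar>D \<tau> - D t\<bar> \<le> c * (\<tau> - t)" if \<tau>: "t < \<tau>" "\<tau> < T" for \<tau>
  proof -
    obtain z where z: "t < z" "z < \<tau>" and eq: "D \<tau> - D t = (\<tau> - t) * D' z"
      using MVT2[OF \<tau>(1), of D D'] deriv \<tau> by force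
    have "\<bar>D \<tau> - D t\<bar> = (\<tau> - t) * \<bar>D' z\<bar>" using eq \<tau> by (simp add: abs_mult)
    also have "\<dots> \<le> (\<tau> - t) * c" using bound z \<tau> by (intro mult_left_mono) auto
    finally show ?thesis by (simp add: mult.commute)
  qed
  have "\<forall>\<^sub>F \<tau> in at_left T. \<bar>D \<tau> - D t\<bar> - c * (\<tau> - t) \<le> 0"
    using eventually_at_left_real[OF t] by (rule eventually_mono) (use increment in auto)
  moreover have "((\<lambda>\<tau>. \<bar>D \<tau> - D t\<bar> - c * (\<tau> - t)) \<longlongrightarrow> \<bar>0 - D t\<bar> - c * (T - t)) (at_left T)"
    by (intro tendsto_intros lim)
  ultimately have "\<bar>0 - D t\<bar> - c * (T - t) \<le> 0"
    by (intro tendsto_upperbound) auto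
  then show ?thesis by simp
qed

lemma ode_solution_mono:
  fixes \<psi> :: "real \<Rightarrow> real"
  assumes pos: "\<forall>t<T. \<psi> t > 0"
    and ode: "\<forall>t<T. (\<psi> has_real_derivative (\<psi> t powr p * ln ((\<psi> t)\<^sup>2 + 2) powr \<alpha>)) (at t)"
    and "a \<le> b" "b < T"
  shows "\<psi> a \<le> \<psi> b"
proof (rule DERIV_nonneg_imp_nondecreasing[OF \<open>a \<le> b\<close>])
  fix x assume "a \<le> x" "x \<le> b"
  then have "x < T" using \<open>b < T\<close> by simp
  then show "\<exists>y. (\<psi> has_real_derivative y) (at x) \<and> y \<ge> 0" using ode pos by auto
qed

lemma remaining_time_estimate:
  fixes \<psi> :: "real \<Rightarrow> real"
  assumes p: "p > 1"
    and pos: "\<forall>t<T. \<psi> t > 0"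
    and ode: "\<forall>t<T. (\<psi> has_real_derivative (\<psi> t powr p * ln ((\<psi> t)\<^sup>2 + 2) powr \<alpha>)) (at t)"
    and blowup: "filterlim \<psi> at_top (at_left T)"
  obtains K where "\<forall>\<^sub>F t in at_left T.
      \<bar>(T - t) - time_profile p \<alpha> (\<psi> t)\<bar> \<le> K / (log_weight (\<psi> t))\<^sup>2 * (T - t)"
proof -
  obtain K where K: "K > 0"
    and defect: "\<forall>\<^sub>F u in at_top. \<bar>profile_defect p \<alpha> u\<bar> \<le> K * \<bar>1 / (log_weight u)\<^sup>2\<bar>"
    using landau_o.bigE[OF profile_defect_bigo[OF p]] by auto
  have "\<forall>\<^sub>F u in at_top. rate p \<alpha> u > 0"
    using order_tendstoD(1)[OF rate_tendsto] p by simp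
  then have "\<forall>\<^sub>F u in at_top. u > 0 \<and> rate p \<alpha> u > 0 \<and> \<bar>profile_defect p \<alpha> u\<bar> \<le> K / (log_weight u)\<^sup>2"
    using defect eventually_gt_at_top[of 0] by eventually_elim simp
  then obtain u0 where u0: "\<And>u. u \<ge> u0 \<Longrightarrow> u > 0 \<and> rate p \<alpha> u > 0 \<and> \<bar>profile_defect p \<alpha> u\<bar> \<le> K / (log_weight u)\<^sup>2"
    unfolding eventually_at_top_linorder by blast
  obtain b where b: "b < T" and large: "\<And>t. b < t \<Longrightarrow> t < T \<Longrightarrow> u0 \<le> \<psi> t"
    using blowup unfolding filterlim_at_top eventually_at_left_field by blast
  define D where "D t = (T - t) - time_profile p \<alpha> (\<psi> t)" for t
  have "((\<lambda>t. time_profile p \<alpha> (\<psi> t)) \<longlongrightarrow> 0) (at_left T)"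
    using filterlim_compose[OF time_profile_tendsto_zero[OF p] blowup] .
  then have lim: "(D \<longlongrightarrow> 0) (at_left T)"
    unfolding D_def[abs_def] by (auto intro!: tendsto_eq_intros)
  have "\<bar>D t\<bar> \<le> K / (log_weight (\<psi> t))\<^sup>2 * (T - t)" if t: "b < t" "t < T" for t
  proof (rule abs_le_of_deriv_bound_tendsto_at_left[OF t(2) lim])
    fix z assume z: "t \<le> z" "z < T"
    then have u0z: "u0 \<le> \<psi> z" using large t by simp
    have "((\<lambda>t. time_profile p \<alpha> (\<psi> t)) has_real_derivative profile_defect p \<alpha> (\<psi> z) - 1) (at z)"
      using time_profile_along_solution[of \<psi> z p \<alpha>] u0[OF u0z] ode z by auto
    from DERIV_diff[OF DERIV_diff[OF DERIV_const DERIV_ident] this]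
    show "(D has_real_derivative - profile_defect p \<alpha> (\<psi> z)) (at z)"
      unfolding D_def[abs_def] by simp
    have "\<psi> t \<le> \<psi> z" using ode_solution_mono[OF pos ode z] .
    moreover have "0 \<le> \<psi> t" using u0[of "\<psi> t"] large t by force
    ultimately have "log_weight (\<psi> t) \<le> log_weight (\<psi> z)" by (rule log_weight_mono[rotated])
    then have "K / (log_weight (\<psi> z))\<^sup>2 \<le> K / (log_weight (\<psi> t))\<^sup>2"
      using K log_weight_pos[of "\<psi> t"] by (intro divide_left_mono power_mono mult_pos_pos) auto
    then show "\<bar>- profile_defect p \<alpha> (\<psi> z)\<bar> \<le> K / (log_weight (\<psi> t))\<^sup>2"
      using u0[OF u0z] by simp
  qed
  then show thesis
    using that[of K] b unfolding D_def eventually_at_left_field by blast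
qed

lemma ratio_bounds_of_relative_error:
  fixes \<tau> \<Phi> c :: real
  assumes \<tau>: "\<tau> > 0" and \<Phi>: "\<Phi> > 0" and c: "c \<le> 1/2" and close: "\<bar>\<tau> - \<Phi>\<bar> \<le> c * \<tau>"
  shows "\<bar>\<tau> / \<Phi> - 1\<bar> \<le> 2 * c" and "\<tau> / \<Phi> \<le> 2" and "2/3 * \<Phi> \<le> \<tau>"
proof -
  have rel: "\<bar>\<tau> / \<Phi> - 1\<bar> \<le> c * (\<tau> / \<Phi>)"
  proof -
    have "\<bar>\<tau> / \<Phi> - 1\<bar> = \<bar>\<tau> - \<Phi>\<bar> / \<Phi>" using \<Phi> by (simp add: field_simps)
    also have "\<dots> \<le> c * \<tau> / \<Phi>" using close \<Phi> by (intro divide_right_mono) auto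
    finally show ?thesis by simp
  qed
  have c0: "c \<ge> 0" using close \<tau> by (smt (verit) zero_le_mult_iff)
  have "c * (\<tau> / \<Phi>) \<le> 1/2 * (\<tau> / \<Phi>)" using c \<tau> \<Phi> by (intro mult_right_mono) auto
  then show r2: "\<tau> / \<Phi> \<le> 2" using rel by linarith
  show "\<bar>\<tau> / \<Phi> - 1\<bar> \<le> 2 * c" using rel mult_left_mono[OF r2 c0] by linarith
  have "c * \<tau> \<le> 1/2 * \<tau>" using c \<tau> by (intro mult_right_mono) auto
  then show "2/3 * \<Phi> \<le> \<tau>" using close by linarith
qed

lemma hfun_mult_rate:
  fixes \<psi> :: "real \<Rightarrow> real"
  assumes x: "psi1 \<psi> T s > 0" and g: "rate p \<alpha> (psi1 \<psi> T s) \<noteq> 0"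
  shows "hfun \<psi> T p \<alpha> s * rate p \<alpha> (psi1 \<psi> T s) = exp (- s) / time_profile p \<alpha> (psi1 \<psi> T s)"
proof -
  define x where "x = psi1 \<psi> T s"
  have L: "log_weight x > 0" by (rule log_weight_pos)
  have powers: "x powr (p - 1) = 1 / x powr (1 - p)" "log_weight x powr \<alpha> = 1 / log_weight x powr (- \<alpha>)"
    using x L unfolding x_def by (simp_all add: powr_minus_divide[symmetric])
  have "x powr (1 - p) > 0" "log_weight x powr (- \<alpha>) > 0" using x L unfolding x_def by simp_all
  then show ?thesis
    using g unfolding hfun_def time_profile_def x_def[symmetric] log_weight_def[symmetric] powers
    by (simp add: field_simps)
qed

lemma hfun_bounds:
  fixes \<psi> :: "real \<Rightarrow> real" and T p \<alpha> s K c :: real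
  defines "x \<equiv> psi1 \<psi> T s"
  assumes p: "p > 1" and x: "x > 0" and g: "(p - 1) / 2 \<le> rate p \<alpha> x"
    and L: "2 * \<bar>K\<bar> + 5 \<le> log_weight x"
    and ln_profile: "\<bar>ln (time_profile p \<alpha> x)\<bar> \<le> c * log_weight x"
    and close: "\<bar>exp (- s) - time_profile p \<alpha> x\<bar> \<le> K / (log_weight x)\<^sup>2 * exp (- s)"
  shows "0 \<le> hfun \<psi> T p \<alpha> s" and "hfun \<psi> T p \<alpha> s \<le> 4 / (p - 1)"
    and "\<bar>hfun \<psi> T p \<alpha> s * rate p \<alpha> x - 1\<bar> \<le> 2 * \<bar>K\<bar> / (log_weight x)\<^sup>2"
    and "s \<le> (c + 1) * log_weight x"
proof -
  have "0 < (p - 1) / 2" using p by simp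
  then have g0: "rate p \<alpha> x > 0" using g by linarith
  have \<Phi>: "time_profile p \<alpha> x > 0" unfolding time_profile_def using x g0 log_weight_pos[of x] by simp
  have L1: "log_weight x \<ge> 1" using L by simp
  have "K / (log_weight x)\<^sup>2 \<le> 1/2"
  proof -
    have "log_weight x * 1 \<le> log_weight x * log_weight x" using L1 by (intro mult_left_mono) auto
    then have "2 * K \<le> log_weight x * log_weight x" using L abs_ge_self[of K] by linarith
    then show ?thesis using L1 by (simp add: power2_eq_square divide_le_eq)
  qed
  note ratio = ratio_bounds_of_relative_error[OF exp_gt_zero \<Phi> this close]
  have hg: "hfun \<psi> T p \<alpha> s * rate p \<alpha> x = exp (- s) / time_profile p \<alpha> x"
    using hfun_mult_rate[of \<psi> T s p \<alpha>] x g0 unfolding x_def by simp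
  show "0 \<le> hfun \<psi> T p \<alpha> s" unfolding hfun_def by (intro mult_nonneg_nonneg) simp_all
  have "2 * (K / (log_weight x)\<^sup>2) \<le> 2 * \<bar>K\<bar> / (log_weight x)\<^sup>2" by (simp add: divide_right_mono)
  then show "\<bar>hfun \<psi> T p \<alpha> s * rate p \<alpha> x - 1\<bar> \<le> 2 * \<bar>K\<bar> / (log_weight x)\<^sup>2"
    unfolding hg using ratio(1) by linarith
  have "hfun \<psi> T p \<alpha> s = hfun \<psi> T p \<alpha> s * rate p \<alpha> x / rate p \<alpha> x" using g0 by simp
  also have "\<dots> = exp (- s) / time_profile p \<alpha> x / rate p \<alpha> x" unfolding hg ..
  also have "\<dots> \<le> 2 / ((p - 1) / 2)" using ratio(2) g g0 p by (intro frac_le) auto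
  finally show "hfun \<psi> T p \<alpha> s \<le> 4 / (p - 1)" by simp
  have "ln (2/3 * time_profile p \<alpha> x) \<le> ln (exp (- s))"
    using ratio(3) \<Phi> by (subst ln_le_cancel_iff) auto
  moreover have "ln (2/3 * time_profile p \<alpha> x) = ln (2/3) + ln (time_profile p \<alpha> x)"
    using \<Phi> by (intro ln_mult_pos) simp_all
  ultimately have "ln (2/3) + ln (time_profile p \<alpha> x) \<le> - s" by simp
  moreover have "- 1 \<le> ln (2/3 :: real)"
    using ln_le_minus_one[of "3/2 :: real"] ln_div[of 2 3] ln_div[of 3 2] by simp
  ultimately show "s \<le> (c + 1) * log_weight x" using ln_profile L1 by (simp add: algebra_simps)
qed

lemma hfun_estimates:
  fixes \<psi> :: "real \<Rightarrow> real"
  assumes p: "p > 1"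
    and pos: "\<forall>t<T. \<psi> t > 0"
    and ode: "\<forall>t<T. (\<psi> has_real_derivative (\<psi> t powr p * ln ((\<psi> t)\<^sup>2 + 2) powr \<alpha>)) (at t)"
    and blowup: "filterlim \<psi> at_top (at_left T)"
  obtains K C where "\<forall>\<^sub>F s in at_top. 5 \<le> log_weight (psi1 \<psi> T s) \<and>
      0 \<le> hfun \<psi> T p \<alpha> s \<and> hfun \<psi> T p \<alpha> s \<le> K \<and>
      \<bar>hfun \<psi> T p \<alpha> s * rate p \<alpha> (psi1 \<psi> T s) - 1\<bar> \<le> K / (log_weight (psi1 \<psi> T s))\<^sup>2 \<and>
      s \<le> C * log_weight (psi1 \<psi> T s)"
proof -
  obtain K where close: "\<forall>\<^sub>F t in at_left T.
      \<bar>(T - t) - time_profile p \<alpha> (\<psi> t)\<bar> \<le> K / (log_weight (\<psi> t))\<^sup>2 * (T - t)"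
    using remaining_time_estimate[OF p pos ode blowup] by blast
  obtain c where ln_profile: "\<forall>\<^sub>F u in at_top. \<bar>ln (time_profile p \<alpha> u)\<bar> \<le> c * \<bar>log_weight u\<bar>"
    using landau_o.bigE[OF ln_time_profile_bigo[OF p]] by auto
  have "(p - 1) / 2 < p - 1" using p by simp
  then have rate: "\<forall>\<^sub>F u in at_top. (p - 1) / 2 < rate p \<alpha> u"
    by (rule order_tendstoD(1)[OF rate_tendsto])
  have weight: "\<forall>\<^sub>F u in at_top. 2 * \<bar>K\<bar> + 5 \<le> log_weight u"
    using log_weight_at_top unfolding filterlim_at_top by blast
  have large: "\<forall>\<^sub>F u in at_top. 0 < u \<and> (p - 1) / 2 \<le> rate p \<alpha> u \<and> 2 * \<bar>K\<bar> + 5 \<le> log_weight u \<and>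
      \<bar>ln (time_profile p \<alpha> u)\<bar> \<le> c * log_weight u"
    using eventually_gt_at_top[of 0] rate weight ln_profile
    by eventually_elim (auto simp: abs_of_pos log_weight_pos)
  have s_lim: "filterlim (\<lambda>s. T - exp (- s)) (at_left T) at_top" by real_asymp
  have close': "\<forall>\<^sub>F s in at_top. \<bar>exp (- s) - time_profile p \<alpha> (psi1 \<psi> T s)\<bar>
      \<le> K / (log_weight (psi1 \<psi> T s))\<^sup>2 * exp (- s)"
    using eventually_compose_filterlim[OF close s_lim] unfolding psi1_def by simp
  have "filterlim (psi1 \<psi> T) at_top at_top"
    unfolding psi1_def[abs_def] by (rule filterlim_compose[OF blowup s_lim])
  from eventually_compose_filterlim[OF large this] close'
  have "\<forall>\<^sub>F s in at_top. 5 \<le> log_weight (psi1 \<psi> T s) \<and>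
      0 \<le> hfun \<psi> T p \<alpha> s \<and> hfun \<psi> T p \<alpha> s \<le> max (2 * \<bar>K\<bar>) (4 / (p - 1)) \<and>
      \<bar>hfun \<psi> T p \<alpha> s * rate p \<alpha> (psi1 \<psi> T s) - 1\<bar> \<le> max (2 * \<bar>K\<bar>) (4 / (p - 1)) / (log_weight (psi1 \<psi> T s))\<^sup>2 \<and>
      s \<le> (c + 1) * log_weight (psi1 \<psi> T s)"
  proof eventually_elim
    case (elim s)
    then have x: "0 < psi1 \<psi> T s" and g: "(p - 1) / 2 \<le> rate p \<alpha> (psi1 \<psi> T s)"
      and L: "2 * \<bar>K\<bar> + 5 \<le> log_weight (psi1 \<psi> T s)"
      and ln_x: "\<bar>ln (time_profile p \<alpha> (psi1 \<psi> T s))\<bar> \<le> c * log_weight (psi1 \<psi> T s)"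
      by auto
    note bounds = hfun_bounds[OF p x g L ln_x elim(2)]
    have "2 * \<bar>K\<bar> / (log_weight (psi1 \<psi> T s))\<^sup>2 \<le> max (2 * \<bar>K\<bar>) (4 / (p - 1)) / (log_weight (psi1 \<psi> T s))\<^sup>2"
      by (intro divide_right_mono) auto
    with bounds L show ?case by (auto simp: le_max_iff_disj)
  qed
  then show thesis by (rule that)
qed

lemma log_weight_errors_le_s_errors:
  fixes L s w C :: real
  assumes L: "0 < L" and sL: "s \<le> C * L" and s: "exp 1 \<le> s"
  shows "\<bar>w\<bar> / L\<^sup>2 + w\<^sup>2 / L + \<bar>w\<bar> ^ 3 \<le> (C\<^sup>2 + C + 1) * (\<bar>w\<bar> * ln s / s\<^sup>2 + w\<^sup>2 / s + \<bar>w\<bar> ^ 3)"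
proof -
  have s0: "s > 0" using s by (smt (verit) exp_gt_zero)
  have ln_s: "ln s \<ge> 1" using s s0 by (simp add: ln_ge_iff)
  have C: "C > 0" using sL s0 L by (smt (verit) mult_nonpos_nonneg)
  have inv: "1 / L \<le> C / s" using sL s0 L by (simp add: field_simps)
  have "\<bar>w\<bar> / L\<^sup>2 = \<bar>w\<bar> * (1 / L)\<^sup>2" by (simp add: power_divide)
  also have "\<dots> \<le> \<bar>w\<bar> * (C / s)\<^sup>2" using inv L by (intro mult_left_mono power_mono) auto
  also have "\<dots> = C\<^sup>2 * (\<bar>w\<bar> * 1 / s\<^sup>2)" by (simp add: power_divide)
  also have "\<dots> \<le> C\<^sup>2 * (\<bar>w\<bar> * ln s / s\<^sup>2)"
    using ln_s s0 by (intro mult_left_mono divide_right_mono) auto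
  finally have first: "\<bar>w\<bar> / L\<^sup>2 \<le> C\<^sup>2 * (\<bar>w\<bar> * ln s / s\<^sup>2)" .
  have second: "w\<^sup>2 / L \<le> C * (w\<^sup>2 / s)"
    using mult_left_mono[OF inv zero_le_power2[of w]] by (simp add: mult.commute)
  define a b c where "a = \<bar>w\<bar> * ln s / s\<^sup>2" and "b = w\<^sup>2 / s" and "c = \<bar>w\<bar> ^ 3"
  have "0 \<le> \<bar>w\<bar> * ln s" using ln_s by simp
  then have abc: "0 \<le> a" "0 \<le> b" "0 \<le> c" unfolding a_def b_def c_def using s0 by simp_all
  have "(C\<^sup>2 + C + 1) * (a + b + c) = C\<^sup>2 * a + C * b + c + ((C + 1) * a + (C\<^sup>2 + 1) * b + (C\<^sup>2 + C) * c)"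
    by (simp add: algebra_simps)
  moreover have "0 \<le> (C + 1) * a + (C\<^sup>2 + 1) * b + (C\<^sup>2 + C) * c"
    using abc C by (intro add_nonneg_nonneg mult_nonneg_nonneg) auto
  ultimately show ?thesis using first second unfolding a_def b_def c_def by linarith
qed

lemma Nfun_estimate:
  fixes \<psi> :: "real \<Rightarrow> real"
  assumes p: "p > 1"
    and pos: "\<forall>t<T. \<psi> t > 0"
    and ode: "\<forall>t<T. (\<psi> has_real_derivative (\<psi> t powr p * ln ((\<psi> t)\<^sup>2 + 2) powr \<alpha>)) (at t)"
    and blowup: "filterlim \<psi> at_top (at_left T)"
  obtains M C where "M \<ge> 0" and "\<forall>\<^sub>F s in at_top. s \<le> C * log_weight (psi1 \<psi> T s) \<and>
      (\<forall>w. \<bar>w\<bar> \<le> 1/5 \<longrightarrow> \<bar>Nfun \<psi> T p \<alpha> w s - p * w\<^sup>2 / 2\<bar>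
         \<le> M * (\<bar>w\<bar> / (log_weight (psi1 \<psi> T s))\<^sup>2 + w\<^sup>2 / log_weight (psi1 \<psi> T s) + \<bar>w\<bar> ^ 3))"
proof -
  obtain K C where hfun: "\<forall>\<^sub>F s in at_top. 5 \<le> log_weight (psi1 \<psi> T s) \<and>
      0 \<le> hfun \<psi> T p \<alpha> s \<and> hfun \<psi> T p \<alpha> s \<le> K \<and>
      \<bar>hfun \<psi> T p \<alpha> s * rate p \<alpha> (psi1 \<psi> T s) - 1\<bar> \<le> K / (log_weight (psi1 \<psi> T s))\<^sup>2 \<and>
      s \<le> C * log_weight (psi1 \<psi> T s)"
    using hfun_estimates[OF p pos ode blowup] by blast
  obtain M where "M \<ge> 0" and N: "\<And>x h w. \<bar>w\<bar> \<le> 1/5 \<Longrightarrow> 5 \<le> log_weight x \<Longrightarrow> 0 \<le> h \<Longrightarrow> h \<le> K \<Longrightarrow>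
      \<bar>h * rate p \<alpha> x - 1\<bar> \<le> K / (log_weight x)\<^sup>2 \<Longrightarrow>
      \<bar>h * \<bar>w + 1\<bar> powr (p - 1) * (w + 1) * ln (x\<^sup>2 * (w + 1)\<^sup>2 + 2) powr \<alpha> / ln (x\<^sup>2 + 2) powr \<alpha>
         - h * (w + 1) - w - p * w\<^sup>2 / 2\<bar>
        \<le> M * (\<bar>w\<bar> / (log_weight x)\<^sup>2 + w\<^sup>2 / log_weight x + \<bar>w\<bar> ^ 3)"
    using nonlinearity_estimate[of p K \<alpha>] p by auto
  show thesis
  proof (rule that[OF \<open>M \<ge> 0\<close>])
    show "\<forall>\<^sub>F s in at_top. s \<le> C * log_weight (psi1 \<psi> T s) \<and>
      (\<forall>w. \<bar>w\<bar> \<le> 1/5 \<longrightarrow> \<bar>Nfun \<psi> T p \<alpha> w s - p * w\<^sup>2 / 2\<bar>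
         \<le> M * (\<bar>w\<bar> / (log_weight (psi1 \<psi> T s))\<^sup>2 + w\<^sup>2 / log_weight (psi1 \<psi> T s) + \<bar>w\<bar> ^ 3))"
      using hfun
    proof eventually_elim
      case (elim s)
      show ?case
      proof (intro conjI allI impI)
        show "s \<le> C * log_weight (psi1 \<psi> T s)" using elim by simp
        fix w :: real assume "\<bar>w\<bar> \<le> 1/5"
        then show "\<bar>Nfun \<psi> T p \<alpha> w s - p * w\<^sup>2 / 2\<bar>
            \<le> M * (\<bar>w\<bar> / (log_weight (psi1 \<psi> T s))\<^sup>2 + w\<^sup>2 / log_weight (psi1 \<psi> T s) + \<bar>w\<bar> ^ 3)"
          unfolding Nfun_def using elim by (intro N) auto
      qed
    qed
  qed
qed

theorem lemmaA6:
  fixes \<psi> :: "real \<Rightarrow> real" and T p \<alpha> :: real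
  assumes "T > 0" and "p > 1"
    and pos: "\<forall>t<T. \<psi> t > 0"
    and ode: "\<forall>t<T. (\<psi> has_real_derivative (\<psi> t powr p * ln ((\<psi> t)\<^sup>2 + 2) powr \<alpha>)) (at t)"
    and blowup: "filterlim \<psi> at_top (at_left T)"
  shows "\<exists>C \<delta> S. \<delta> > 0 \<and> (\<forall>w s. \<bar>w\<bar> < \<delta> \<and> s \<ge> S \<longrightarrow>
           \<bar>Nfun \<psi> T p \<alpha> w s - p * w\<^sup>2 / 2\<bar>
             \<le> C * (\<bar>w\<bar> * ln s / s\<^sup>2 + w\<^sup>2 / s + \<bar>w\<bar> ^ 3))"
proof -
  obtain M C where M: "M \<ge> 0" and ev: "\<forall>\<^sub>F s in at_top. s \<le> C * log_weight (psi1 \<psi> T s) \<and>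
      (\<forall>w. \<bar>w\<bar> \<le> 1/5 \<longrightarrow> \<bar>Nfun \<psi> T p \<alpha> w s - p * w\<^sup>2 / 2\<bar>
         \<le> M * (\<bar>w\<bar> / (log_weight (psi1 \<psi> T s))\<^sup>2 + w\<^sup>2 / log_weight (psi1 \<psi> T s) + \<bar>w\<bar> ^ 3))"
    using Nfun_estimate[OF \<open>p > 1\<close> pos ode blowup] by blast
  obtain S where S: "\<And>s. s \<ge> S \<Longrightarrow> exp 1 \<le> s \<and> s \<le> C * log_weight (psi1 \<psi> T s) \<and>
      (\<forall>w. \<bar>w\<bar> \<le> 1/5 \<longrightarrow> \<bar>Nfun \<psi> T p \<alpha> w s - p * w\<^sup>2 / 2\<bar>
         \<le> M * (\<bar>w\<bar> / (log_weight (psi1 \<psi> T s))\<^sup>2 + w\<^sup>2 / log_weight (psi1 \<psi> T s) + \<bar>w\<bar> ^ 3))"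
    using eventually_conj[OF eventually_ge_at_top[of "exp 1"] ev] unfolding eventually_at_top_linorder by blast
  have "\<bar>Nfun \<psi> T p \<alpha> w s - p * w\<^sup>2 / 2\<bar> \<le> M * (C\<^sup>2 + C + 1) * (\<bar>w\<bar> * ln s / s\<^sup>2 + w\<^sup>2 / s + \<bar>w\<bar> ^ 3)"
    if w: "\<bar>w\<bar> < 1/5" and s: "s \<ge> S" for w s
  proof -
    have "\<bar>Nfun \<psi> T p \<alpha> w s - p * w\<^sup>2 / 2\<bar>
        \<le> M * (\<bar>w\<bar> / (log_weight (psi1 \<psi> T s))\<^sup>2 + w\<^sup>2 / log_weight (psi1 \<psi> T s) + \<bar>w\<bar> ^ 3)"
      using S[OF s] w by simp
    also have "\<dots> \<le> M * ((C\<^sup>2 + C + 1) * (\<bar>w\<bar> * ln s / s\<^sup>2 + w\<^sup>2 / s + \<bar>w\<bar> ^ 3))"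
      using M S[OF s] log_weight_pos by (intro mult_left_mono log_weight_errors_le_s_errors) auto
    finally show ?thesis by (simp add: mult.assoc)
  qed
  then show ?thesis by (intro exI[of _ "M * (C\<^sup>2 + C + 1)"] exI[of _ "1/5"] exI[of _ S]) auto
qed

end
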